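(* Let $0\le\alpha<1$, $\theta>-\alpha$, $r\in[n]$, and $d_{n,r}=\binom nr(1-\alpha)_{r-1}(\theta+\alpha)_{n-r}\Gamma(\theta+1)/\Gamma(\theta+n)$. For the IBP with parameters $(\gamma,\alpha,\theta)$, $K_{n,r}\mid\gamma\sim\mathrm{Poisson}(\gamma d_{n,r})$; for the gamma mixture of IBPs with $\gamma\sim\mathrm{Gamma}(a,b)$, $K_{n,r}\sim\mathrm{NegBinomial}(a,(a/b)d_{n,r})$.
   Context: $(x)_m=\Gamma(x+m)/\Gamma(x)$; $[n]=\{1,\dots,n\}$; $g_n(\theta,\alpha)=\sum_{i=1}^n\frac{(\theta+\alpha)_{i-1}}{(\theta+1)_{i-1}}$. $K_{n,r}$ is the number of features displayed by exactly $r$ of the first $n$ individuals. The IBP with parameters $(\gamma,\alpha,\theta)$, $\gamma>0$, has exchangeable feature probability function (probability of any given ordered feature allocation of $[n]$ into $k$ nonempty sets of sizes $m_1,\dots,m_k$) $V_{n,k}\prod_{\ell=1}^k(1-\alpha)_{m_\ell-1}(\theta+\alpha)_{n-m_\ell}$ with $V_{n,k}=\frac1{k!}\{\gamma/(\theta+1)_{n-1}\}^ke^{-\gamma g_n(\theta,\alpha)}$; the gamma mixture takes $\gamma\sim\mathrm{Gamma}(a,b)$ (shape $a$, rate $b$). $\mathrm{NegBinomial}(n_0,\mu_0)$ has pmf $\binom{y+n_0-1}{y}p^{n_0}(1-p)^y$, $y\in\mathbb N_0$, $p=n_0/(\mu_0+n_0)$. *)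

theory Defs
  imports "HOL-Probability.Probability"
begin

text \<open>Ordered feature allocations of [n] = {1..n}: finite lists of nonempty subsets of {1..n}
  (repetitions allowed); the number of features is the length of the list.\<close>
definition ordered_feature_allocations :: "nat \<Rightarrow> nat set list set" where
  "ordered_feature_allocations n = {As. \<forall>A\<in>set As. A \<noteq> {} \<and> A \<subseteq> {1..n}}"

text \<open>K_{n,r}: number of features displayed by exactly r of the n individuals.\<close>
definition K_count :: "nat \<Rightarrow> nat set list \<Rightarrow> nat" where
  "K_count r As = length (filter (\<lambda>A. card A = r) As)"

definition g_fun :: "nat \<Rightarrow> real \<Rightarrow> real \<Rightarrow> real" where
  "g_fun n \<theta> \<alpha> = (\<Sum>i=1..n. pochhammer (\<theta> + \<alpha>) (i - 1) / pochhammer (\<theta> + 1) (i - 1))"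

definition V_ibp :: "real \<Rightarrow> real \<Rightarrow> real \<Rightarrow> nat \<Rightarrow> nat \<Rightarrow> real" where
  "V_ibp \<gamma> \<alpha> \<theta> n k =
     1 / fact k * (\<gamma> / pochhammer (\<theta> + 1) (n - 1)) ^ k * exp (- \<gamma> * g_fun n \<theta> \<alpha>)"

definition ibp_efpf :: "real \<Rightarrow> real \<Rightarrow> real \<Rightarrow> nat \<Rightarrow> nat set list \<Rightarrow> real" where
  "ibp_efpf \<gamma> \<alpha> \<theta> n As =
     V_ibp \<gamma> \<alpha> \<theta> n (length As) *
     prod_list (map (\<lambda>A. pochhammer (1 - \<alpha>) (card A - 1) * pochhammer (\<theta> + \<alpha>) (n - card A)) As)"

text \<open>Density of Gamma(a,b) (shape a, rate b) on (0,infinity).\<close>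
definition gamma_density :: "real \<Rightarrow> real \<Rightarrow> real \<Rightarrow> real" where
  "gamma_density a b x = (if 0 < x then b powr a / Gamma a * x powr (a - 1) * exp (- b * x) else 0)"

definition ibp_gamma_mix_efpf :: "real \<Rightarrow> real \<Rightarrow> real \<Rightarrow> real \<Rightarrow> nat \<Rightarrow> nat set list \<Rightarrow> real" where
  "ibp_gamma_mix_efpf a b \<alpha> \<theta> n As =
     (LINT \<gamma>|lborel. gamma_density a b \<gamma> * ibp_efpf \<gamma> \<alpha> \<theta> n As)"

definition d_coef :: "nat \<Rightarrow> nat \<Rightarrow> real \<Rightarrow> real \<Rightarrow> real" where
  "d_coef n r \<alpha> \<theta> = real (n choose r) * pochhammer (1 - \<alpha>) (r - 1) * pochhammer (\<theta> + \<alpha>) (n - r)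
     * Gamma (\<theta> + 1) / Gamma (\<theta> + real n)"

definition negbinomial_pmf :: "real \<Rightarrow> real \<Rightarrow> nat \<Rightarrow> real" where
  "negbinomial_pmf n0 \<mu>0 y =
     (let p = n0 / (\<mu>0 + n0) in ((real y + n0 - 1) gchoose y) * p powr n0 * (1 - p) ^ y)"

end

theory Submission
  imports Defs
begin

text \<open>The EFPF of the IBP factorises as \<open>\<phi> k * (\<Prod>i. w A\<^sub>i)\<close>, where \<open>\<phi>\<close> depends only on the
  number \<open>k\<close> of features and \<open>w A\<close> only on \<open>card A\<close>. Among the lists of length \<open>k\<close> of feature
  sets, those with exactly \<open>j\<close> entries of size \<open>r\<close> carry total weight
  \<open>\<phi> k * (k choose j) * R ^ j * N ^ (k - j)\<close>, where \<open>R\<close> is the weight of the \<open>r\<close>-element sets and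
  \<open>N\<close> that of the others. With \<open>w\<close> normalised by \<open>(\<theta>+1)_(n-1)\<close>, a Chu--Vandermonde argument gives
  \<open>R + N = g_n(\<theta>,\<alpha>)\<close> and \<open>R = d_(n,r)\<close>. For the IBP, \<open>\<phi> k = \<gamma>^k exp(-\<gamma> g_n) / k!\<close>, and the sum
  over \<open>k\<close> is an exponential series yielding the Poisson mass. For the gamma mixture, integrating
  out \<open>\<gamma>\<close> turns \<open>\<phi> k\<close> into \<open>(b/(b+g_n))^a (a)_k / (k! (b+g_n)^k)\<close>, and the sum over \<open>k\<close> is a
  negative binomial series yielding the NegBinomial mass.\<close>

section \<open>Weighted lists with a prescribed number of marked entries\<close>

definition lists_len_count :: "'a set \<Rightarrow> ('a \<Rightarrow> bool) \<Rightarrow> nat \<Rightarrow> nat \<Rightarrow> 'a list set" where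
  "lists_len_count S P k j = {xs. set xs \<subseteq> S \<and> length xs = k \<and> length (filter P xs) = j}"

lemma finite_lists_len_count: "finite S \<Longrightarrow> finite (lists_len_count S P k j)"
  unfolding lists_len_count_def
  by (rule finite_subset[OF _ finite_lists_length_eq[of S k]]) auto

lemma sum_prod_list_lists_len_count_Suc:
  fixes w :: "'a \<Rightarrow> real"
  assumes "finite S"
  shows "(\<Sum>xs\<in>lists_len_count S P (Suc k) j. prod_list (map w xs)) =
     (\<Sum>x\<in>{x\<in>S. P x}. w x) * (if j = 0 then 0 else \<Sum>xs\<in>lists_len_count S P k (j - 1). prod_list (map w xs))
     + (\<Sum>x\<in>{x\<in>S. \<not> P x}. w x) * (\<Sum>xs\<in>lists_len_count S P k j. prod_list (map w xs))"
proof -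
  define T where "T i = (\<Sum>xs\<in>lists_len_count S P k i. prod_list (map w xs))" for i
  define tails where
    "tails x = (if P x then (if j = 0 then {} else lists_len_count S P k (j - 1)) else lists_len_count S P k j)" for x
  have split: "lists_len_count S P (Suc k) j = (\<lambda>(x, xs). x # xs) ` (SIGMA x:S. tails x)"
    by (auto simp: lists_len_count_def tails_def length_Suc_conv image_iff split: if_splits)
  have inj: "inj_on (\<lambda>(x, xs). x # xs) (SIGMA x:S. tails x)"
    by (auto simp: inj_on_def)
  have "(\<Sum>xs\<in>lists_len_count S P (Suc k) j. prod_list (map w xs)) =
      (\<Sum>(x, xs)\<in>(SIGMA x:S. tails x). w x * prod_list (map w xs))"
    unfolding split sum.reindex[OF inj] by (simp add: case_prod_unfold)
  also have "\<dots> = (\<Sum>x\<in>S. w x * (\<Sum>xs\<in>tails x. prod_list (map w xs)))"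
    using assms by (subst sum.Sigma[symmetric])
      (auto simp: tails_def finite_lists_len_count sum_distrib_left)
  also have "\<dots> = (\<Sum>x\<in>S. if P x then w x * (if j = 0 then 0 else T (j - 1)) else w x * T j)"
    by (intro sum.cong) (auto simp: tails_def T_def)
  also have "\<dots> = (\<Sum>x\<in>{x\<in>S. P x}. w x) * (if j = 0 then 0 else T (j - 1)) + (\<Sum>x\<in>{x\<in>S. \<not> P x}. w x) * T j"
    using assms by (simp add: sum.If_cases sum_distrib_right Collect_conj_eq Int_commute Compl_eq)
  finally show ?thesis by (simp add: T_def)
qed

lemma sum_prod_list_lists_len_count:
  fixes w :: "'a \<Rightarrow> real"
  assumes "finite S"
  shows "(\<Sum>xs\<in>lists_len_count S P k j. prod_list (map w xs)) =
     real (k choose j) * (\<Sum>x\<in>{x\<in>S. P x}. w x) ^ j * (\<Sum>x\<in>{x\<in>S. \<not> P x}. w x) ^ (k - j)"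
proof (induction k arbitrary: j)
  case 0
  have "lists_len_count S P 0 j = (if j = 0 then {[]} else {})"
    by (auto simp: lists_len_count_def)
  then show ?case by simp
next
  case (Suc k)
  define R where "R = (\<Sum>x\<in>{x\<in>S. P x}. w x)"
  define N where "N = (\<Sum>x\<in>{x\<in>S. \<not> P x}. w x)"
  show ?case
  proof (cases j)
    case 0
    then show ?thesis using Suc by (simp add: sum_prod_list_lists_len_count_Suc[OF assms])
  next
    case (Suc i)
    have "real (Suc k choose Suc i) * R ^ Suc i * N ^ (Suc k - Suc i) =
        R * (real (k choose i) * R ^ i * N ^ (k - i)) + N * (real (k choose Suc i) * R ^ Suc i * N ^ (k - Suc i))"
    proof (cases "i < k")
      case True
      then have "k - i = Suc (k - Suc i)" by simp
      then show ?thesis by (simp add: algebra_simps)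
    qed (simp add: binomial_eq_0)
    then show ?thesis
      using Suc.IH Suc by (simp add: sum_prod_list_lists_len_count_Suc[OF assms] R_def N_def)
  qed
qed

text \<open>Sum first over the (finitely many) lists of a fixed length, then over the length.\<close>

lemma has_sum_prod_list_count_filter:
  fixes w :: "'a \<Rightarrow> real" and \<phi> :: "nat \<Rightarrow> real"
  assumes S: "finite S" and w: "\<And>x. x \<in> S \<Longrightarrow> 0 \<le> w x" and \<phi>: "\<And>k. 0 \<le> \<phi> k"
    and L: "(\<lambda>k. \<phi> k * (real (k choose j) * (\<Sum>x\<in>{x\<in>S. P x}. w x) ^ j
                 * (\<Sum>x\<in>{x\<in>S. \<not> P x}. w x) ^ (k - j))) sums L"
  shows "((\<lambda>xs. \<phi> (length xs) * prod_list (map w xs)) has_sum L)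
           {xs. set xs \<subseteq> S \<and> length (filter P xs) = j}"
proof -
  define f where "f = (\<lambda>(k::nat, xs). \<phi> k * prod_list (map w xs))"
  define g where "g = (\<lambda>k. \<phi> k * (real (k choose j) * (\<Sum>x\<in>{x\<in>S. P x}. w x) ^ j
                 * (\<Sum>x\<in>{x\<in>S. \<not> P x}. w x) ^ (k - j)))"
  let ?I = "Sigma UNIV (\<lambda>k. lists_len_count S P k j)"
  have fiber: "((\<lambda>xs. f (k, xs)) has_sum g k) (lists_len_count S P k j)" for k
    using has_sum_finite[OF finite_lists_len_count[OF S], of "\<lambda>xs. f (k, xs)" P k j]
    by (simp add: f_def g_def sum_distrib_left[symmetric] sum_prod_list_lists_len_count[OF S])
  have f_nonneg: "0 \<le> f p" if "p \<in> ?I" for p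
    using that \<phi> w unfolding f_def lists_len_count_def
    by (auto intro!: mult_nonneg_nonneg prod_list_nonneg simp: subset_iff)
  have g_nonneg: "0 \<le> g k" for k
    using \<phi> w by (auto simp: g_def intro!: mult_nonneg_nonneg zero_le_power sum_nonneg)
  have "(g has_sum L) UNIV"
    using L g_nonneg unfolding g_def[symmetric] by (rule sums_nonneg_imp_has_sum)
  then have "(f has_sum L) ?I"
    using fiber f_nonneg
    by (intro has_sum_SigmaI[OF fiber] summable_on_SigmaI[OF fiber]) (auto simp: has_sum_iff)
  then have "(((\<lambda>xs. \<phi> (length xs) * prod_list (map w xs)) \<circ> snd) has_sum L) ?I"
    by (rule has_sum_cong[THEN iffD1, rotated]) (auto simp: f_def lists_len_count_def)
  then have "((\<lambda>xs. \<phi> (length xs) * prod_list (map w xs)) has_sum L) (snd ` ?I)"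
    by (subst has_sum_reindex) (auto simp: inj_on_def lists_len_count_def)
  moreover have "snd ` ?I = {xs. set xs \<subseteq> S \<and> length (filter P xs) = j}"
    by (auto simp: lists_len_count_def image_iff)
  ultimately show ?thesis by simp
qed

section \<open>Thinned Poisson and negative binomial series\<close>

lemma sums_binomial_thinning:
  fixes F :: "nat \<Rightarrow> real"
  assumes "(\<lambda>i. F (i + j) * fact (i + j) / fact i * N ^ i) sums L"
  shows "(\<lambda>k. F k * (real (k choose j) * R ^ j * N ^ (k - j))) sums (R ^ j / fact j * L)"
proof -
  have "(\<lambda>i. F (i + j) * (real ((i + j) choose j) * R ^ j * N ^ (i + j - j))) sums (R ^ j / fact j * L)"
  proof (rule sums_cong[THEN iffD1, OF _ sums_mult[OF assms]])
    fix i
    have "real ((i + j) choose j) = fact (i + j) / (fact j * fact i)"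
      using binomial_fact[of j "i + j", where 'a = real] by simp
    then show "R ^ j / fact j * (F (i + j) * fact (i + j) / fact i * N ^ i) =
        F (i + j) * (real ((i + j) choose j) * R ^ j * N ^ (i + j - j))"
      by simp
  qed
  moreover have "(\<Sum>k<j. F k * (real (k choose j) * R ^ j * N ^ (k - j))) = 0"
    by (simp add: binomial_eq_0)
  ultimately show ?thesis
    using sums_iff_shift[of "\<lambda>k. F k * (real (k choose j) * R ^ j * N ^ (k - j))" j] by simp
qed

lemma sums_exp_binomial_thinning:
  fixes c R N :: real
  shows "(\<lambda>k. c ^ k / fact k * (real (k choose j) * R ^ j * N ^ (k - j))) sums
           ((c * R) ^ j / fact j * exp (c * N))"
proof -
  have "(\<lambda>i. c ^ j * ((c * N) ^ i / fact i)) sums (c ^ j * exp (c * N))"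
    using exp_converges[of "c * N"] by (intro sums_mult) (simp add: divide_inverse mult.commute)
  then have "(\<lambda>i. c ^ (i + j) / fact (i + j) * fact (i + j) / fact i * N ^ i) sums (c ^ j * exp (c * N))"
    by (simp add: power_add power_mult_distrib mult_ac)
  from sums_binomial_thinning[OF this, of R] show ?thesis
    by (simp add: power_mult_distrib mult_ac)
qed

lemma sums_pochhammer_power:
  fixes s v :: real
  assumes "0 \<le> v" "v < 1"
  shows "(\<lambda>i. pochhammer s i / fact i * v ^ i) sums (1 - v) powr (- s)"
proof -
  have "(\<lambda>i. ((- s) gchoose i) * (- v) ^ i) sums (1 + - v) powr (- s)"
    by (rule gen_binomial_real) (use assms in auto)
  moreover have "((- s) gchoose i) * (- v) ^ i = pochhammer s i / fact i * v ^ i" for i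
  proof -
    have "(-1::real) ^ i * (-1) ^ i = 1"
      by (simp flip: power_mult_distrib)
    then show ?thesis
      by (simp add: gbinomial_pochhammer power_minus[of v] mult.assoc mult.left_commute[of "(-1::real) ^ i"])
  qed
  ultimately show ?thesis by simp
qed

lemma sums_pochhammer_binomial_thinning:
  fixes a c R N :: real
  assumes "0 \<le> c * N" "c * N < 1"
  shows "(\<lambda>k. pochhammer a k / fact k * c ^ k * (real (k choose j) * R ^ j * N ^ (k - j))) sums
           (pochhammer a j / fact j * (c * R / (1 - c * N)) ^ j * (1 - c * N) powr (- a))"
proof -
  have pos: "0 < 1 - c * N" using assms by simp
  have "(\<lambda>i. pochhammer a j * c ^ j * (pochhammer (a + j) i / fact i * (c * N) ^ i)) sums
          (pochhammer a j * c ^ j * (1 - c * N) powr (- (a + j)))"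
    by (intro sums_mult sums_pochhammer_power assms)
  then have "(\<lambda>i. pochhammer a (i + j) / fact (i + j) * c ^ (i + j) * fact (i + j) / fact i * N ^ i) sums
          (pochhammer a j * c ^ j * (1 - c * N) powr (- (a + j)))"
    by (simp add: pochhammer_product'[of a j] add.commute[of _ j] power_add power_mult_distrib mult_ac)
  moreover have "(1 - c * N) powr (- (a + j)) = (1 - c * N) powr (- a) / (1 - c * N) ^ j"
    using pos by (simp add: powr_diff powr_minus powr_realpow divide_inverse)
  ultimately have "(\<lambda>k. pochhammer a k / fact k * c ^ k * (real (k choose j) * R ^ j * N ^ (k - j))) sums
      (R ^ j / fact j * (pochhammer a j * c ^ j * ((1 - c * N) powr (- a) / (1 - c * N) ^ j)))"
    by (intro sums_binomial_thinning) simp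
  moreover have "R ^ j / fact j * (pochhammer a j * c ^ j * ((1 - c * N) powr (- a) / (1 - c * N) ^ j)) =
      pochhammer a j / fact j * (c * R / (1 - c * N)) ^ j * (1 - c * N) powr (- a)"
    by (simp add: power_divide power_mult_distrib)
  ultimately show ?thesis by (simp only:)
qed

lemma sum_filter_add_sum_filter_not:
  "finite S \<Longrightarrow> (\<Sum>x\<in>{x\<in>S. P x}. w x) + (\<Sum>x\<in>{x\<in>S. \<not> P x}. w x) = sum w S"
  using sum.If_cases[of S P w w] by (simp add: Collect_conj_eq Int_commute Compl_eq)

lemma has_sum_poisson_count_filter:
  fixes w :: "'a \<Rightarrow> real" and P :: "'a \<Rightarrow> bool" and S :: "'a set"
  assumes S: "finite S" and w: "\<And>x. x \<in> S \<Longrightarrow> 0 \<le> w x"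
  defines "W \<equiv> \<Sum>x\<in>S. w x" and "R \<equiv> \<Sum>x\<in>{x\<in>S. P x}. w x"
  assumes c: "0 < c" and R: "0 < R"
  shows "((\<lambda>xs. c ^ length xs / fact (length xs) * exp (- c * W) * prod_list (map w xs))
           has_sum pmf (poisson_pmf (c * R)) j) {xs. set xs \<subseteq> S \<and> length (filter P xs) = j}"
proof -
  define N where "N = (\<Sum>x\<in>{x\<in>S. \<not> P x}. w x)"
  define \<phi> where "\<phi> k = exp (- c * W) * (c ^ k / fact k)" for k
  have "(\<lambda>k. \<phi> k * (real (k choose j) * R ^ j * N ^ (k - j))) sums
      (exp (- c * W) * ((c * R) ^ j / fact j * exp (c * N)))"
    using sums_mult[OF sums_exp_binomial_thinning[of c j R N], of "exp (- c * W)"] by (simp add: \<phi>_def mult_ac)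
  moreover have "W = R + N"
    using sum_filter_add_sum_filter_not[OF S, of w P] by (simp add: W_def R_def N_def)
  then have "exp (- c * W) * ((c * R) ^ j / fact j * exp (c * N)) = pmf (poisson_pmf (c * R)) j"
    using c R by (simp add: exp_add[symmetric] algebra_simps)
  ultimately have "((\<lambda>xs. \<phi> (length xs) * prod_list (map w xs)) has_sum pmf (poisson_pmf (c * R)) j)
      {xs. set xs \<subseteq> S \<and> length (filter P xs) = j}"
    unfolding R_def N_def by (intro has_sum_prod_list_count_filter[OF S w]) (auto simp: \<phi>_def c less_imp_le)
  then show ?thesis by (simp add: \<phi>_def mult_ac)
qed

lemma negbinomial_pmf_gamma_poisson:
  fixes a b d :: real
  assumes a: "a > 0" and b: "b > 0" and d: "d \<ge> 0"
  shows "negbinomial_pmf a (a / b * d) j =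
           pochhammer a j / fact j * (b / (b + d)) powr a * (d / (b + d)) ^ j"
proof -
  have "a / b * d + a = a * (b + d) / b"
    using b by (simp add: field_simps)
  then have p: "a / (a / b * d + a) = b / (b + d)"
    using a b d by simp
  have q: "1 - b / (b + d) = d / (b + d)"
    using b d by (simp add: field_simps)
  have "(real j + a - 1) gchoose j = pochhammer a j / fact j"
    by (simp add: gbinomial_pochhammer')
  then show ?thesis
    unfolding negbinomial_pmf_def Let_def p q by simp
qed

lemma sums_negbinomial_thinning:
  fixes a b R N :: real
  assumes a: "0 < a" and b: "0 < b" and R: "0 \<le> R" and N: "0 \<le> N"
  shows "(\<lambda>k. (b / (b + (R + N))) powr a * (pochhammer a k / fact k * (1 / (b + (R + N))) ^ k)
           * (real (k choose j) * R ^ j * N ^ (k - j))) sums negbinomial_pmf a (a / b * R) j"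
proof -
  define B where "B = b + (R + N)"
  have B: "0 < B" using b R N by (simp add: B_def)
  have rest: "1 - 1 / B * N = (b + R) / B"
    using B by (simp add: B_def field_simps)
  have ratio: "1 / B * R / ((b + R) / B) = R / (b + R)"
    using B b R by (simp add: divide_simps)
  have "0 \<le> 1 / B * N" "1 / B * N < 1"
    using B N b R by (simp_all add: B_def field_simps)
  from sums_pochhammer_binomial_thinning[OF this, of a j R]
  have "(\<lambda>k. pochhammer a k / fact k * (1 / B) ^ k * (real (k choose j) * R ^ j * N ^ (k - j))) sums
      (pochhammer a j / fact j * (R / (b + R)) ^ j * ((b + R) / B) powr (- a))"
    unfolding rest ratio .
  from sums_mult[OF this, of "(b / B) powr a"]
  have "(\<lambda>k. (b / B) powr a * (pochhammer a k / fact k * (1 / B) ^ k) * (real (k choose j) * R ^ j * N ^ (k - j)))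
      sums ((b / B) powr a * ((b + R) / B) powr (- a) * (pochhammer a j / fact j * (R / (b + R)) ^ j))"
    by (simp add: mult_ac)
  also have "(b / B) powr a * ((b + R) / B) powr (- a) = (b / (b + R)) powr a"
    using B b R by (simp add: powr_minus powr_divide field_simps)
  also have "(b / (b + R)) powr a * (pochhammer a j / fact j * (R / (b + R)) ^ j) = negbinomial_pmf a (a / b * R) j"
    using negbinomial_pmf_gamma_poisson[OF a b R, of j] by simp
  finally show ?thesis by (simp add: B_def)
qed

lemma has_sum_negbinomial_count_filter:
  fixes w :: "'a \<Rightarrow> real" and P :: "'a \<Rightarrow> bool" and S :: "'a set"
  assumes S: "finite S" and w: "\<And>x. x \<in> S \<Longrightarrow> 0 \<le> w x" and a: "0 < a" and b: "0 < b"
  defines "W \<equiv> \<Sum>x\<in>S. w x" and "R \<equiv> \<Sum>x\<in>{x\<in>S. P x}. w x"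
  shows "((\<lambda>xs. (b / (b + W)) powr a * pochhammer a (length xs) / fact (length xs)
                 * (1 / (b + W)) ^ length xs * prod_list (map w xs))
           has_sum negbinomial_pmf a (a / b * R) j) {xs. set xs \<subseteq> S \<and> length (filter P xs) = j}"
proof -
  define N where "N = (\<Sum>x\<in>{x\<in>S. \<not> P x}. w x)"
  have R: "0 \<le> R" and N: "0 \<le> N"
    using w by (auto simp: R_def N_def intro!: sum_nonneg)
  have W: "W = R + N"
    using sum_filter_add_sum_filter_not[OF S, of w P] by (simp add: W_def R_def N_def)
  define \<phi> where "\<phi> k = (b / (b + W)) powr a * (pochhammer a k / fact k * (1 / (b + W)) ^ k)" for k
  have \<phi>_nonneg: "0 \<le> \<phi> k" for k
    unfolding \<phi>_def using a b R N W pochhammer_pos[of a k] by simp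
  have "(\<lambda>k. \<phi> k * (real (k choose j) * R ^ j * N ^ (k - j))) sums negbinomial_pmf a (a / b * R) j"
    using sums_negbinomial_thinning[OF a b R N, of j] by (simp add: \<phi>_def W)
  then have "((\<lambda>xs. \<phi> (length xs) * prod_list (map w xs)) has_sum negbinomial_pmf a (a / b * R) j)
      {xs. set xs \<subseteq> S \<and> length (filter P xs) = j}"
    unfolding R_def N_def by (intro has_sum_prod_list_count_filter[OF S w \<phi>_nonneg])
  then show ?thesis by (simp add: \<phi>_def mult_ac)
qed

section \<open>Gamma integrals\<close>

lemma has_bochner_integral_Gamma:
  fixes s :: real
  assumes "0 < s"
  shows "has_bochner_integral lborel (\<lambda>t. indicator {0..} t * t powr (s - 1) / exp t) (Gamma s)"
  using assms Gamma_real_pos[OF assms]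
  by (intro has_bochner_integral_nn_integral) (auto simp: Gamma_conv_nn_integral_real)

lemma has_bochner_integral_powr_exp:
  fixes s B :: real
  assumes s: "0 < s" and B: "0 < B"
  shows "has_bochner_integral lborel (\<lambda>t. if 0 < t then t powr (s - 1) * exp (- (B * t)) else 0)
           (Gamma s / B powr s)"
proof -
  have "has_bochner_integral lborel
      (\<lambda>t. indicator {0..} (0 + B * t) * (0 + B * t) powr (s - 1) / exp (0 + B * t)) (Gamma s /\<^sub>R \<bar>B\<bar>)"
    using B by (intro lborel_has_bochner_integral_real_affine_iff[where c = B and t = 0, THEN iffD1]
        has_bochner_integral_Gamma s) simp
  from has_bochner_integral_mult_right[OF this, of "1 / B powr (s - 1)"]
  have "has_bochner_integral lborel
      (\<lambda>t. 1 / B powr (s - 1) * (indicator {0..} (B * t) * (B * t) powr (s - 1) / exp (B * t))) (Gamma s / B powr s)"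
    using B by (simp add: powr_diff field_simps)
  moreover have "1 / B powr (s - 1) * (indicator {0..} (B * t) * (B * t) powr (s - 1) / exp (B * t)) =
      (if 0 < t then t powr (s - 1) * exp (- (B * t)) else 0)" for t
    using B by (auto simp: indicator_def powr_mult exp_minus divide_inverse zero_le_mult_iff)
  ultimately show ?thesis by simp
qed

lemma has_bochner_integral_gamma_density_power_exp:
  fixes a b W :: real
  assumes a: "0 < a" and b: "0 < b" and W: "0 \<le> W"
  shows "has_bochner_integral lborel (\<lambda>t. gamma_density a b t * (t ^ k * exp (- W * t)))
           ((b / (b + W)) powr a * pochhammer a k / (b + W) ^ k)"
proof -
  define B where "B = b + W"
  have B: "0 < B" using b W by (simp add: B_def)
  have Ga: "0 < Gamma a" using a by (rule Gamma_real_pos)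
  have integrand: "gamma_density a b t * (t ^ k * exp (- W * t)) =
      b powr a / Gamma a * (if 0 < t then t powr (a + k - 1) * exp (- (B * t)) else 0)" for t
  proof (cases "0 < t")
    case True
    then have "t powr (a + k - 1) = t powr (a - 1) * t ^ k"
      by (simp add: powr_add[symmetric] powr_realpow[symmetric] algebra_simps)
    moreover have "exp (- (B * t)) = exp (- b * t) * exp (- W * t)"
      by (simp add: B_def mult_exp_exp algebra_simps)
    ultimately show ?thesis
      using True by (simp add: gamma_density_def)
  qed (simp add: gamma_density_def)
  have "a \<notin> \<int>\<^sub>\<le>\<^sub>0"
    using a by (auto elim!: nonpos_Ints_cases)
  then have "Gamma (a + k) = Gamma a * pochhammer a k"
    using pochhammer_Gamma[of a k] Ga by (simp add: field_simps)
  moreover have "B powr (a + k) = B powr a * B ^ k"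
    using B by (simp add: powr_add powr_realpow)
  ultimately have "b powr a / Gamma a * (Gamma (a + k) / B powr (a + k)) = (b / B) powr a * pochhammer a k / B ^ k"
    using Ga B b by (simp add: powr_divide)
  then show ?thesis
    unfolding integrand B_def[symmetric]
    using has_bochner_integral_mult_right[OF has_bochner_integral_powr_exp[of "a + k" B], of "b powr a / Gamma a"] a B
    by simp
qed

section \<open>A Pochhammer identity\<close>

text \<open>Pascal's rule splits the sum into a Chu--Vandermonde convolution and a part expressible
  through the sum for \<open>n\<close>.\<close>

lemma sum_binomial_pochhammer_pred_Suc:
  fixes x y :: real
  shows "(\<Sum>m=1..Suc n. real (Suc n choose m) * pochhammer x (m - 1) * pochhammer y (Suc n - m)) =
    (x + y + real n - 1) * (\<Sum>m=1..n. real (n choose m) * pochhammer x (m - 1) * pochhammer y (n - m))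
    + pochhammer y n"
proof -
  define F where "F = (\<Sum>i<n. real (n choose Suc i) * pochhammer x i * pochhammer y (n - Suc i))"
  have vandermonde: "(\<Sum>i<Suc n. real (n choose i) * pochhammer x i * pochhammer y (n - i)) = pochhammer (x + y) n"
    by (simp add: pochhammer_binomial_sum lessThan_Suc_atMost)
  have "(\<Sum>i<n. real (n choose Suc i) * pochhammer x i * pochhammer y (n - i)) =
      (\<Sum>i<n. (x + y + real n - 1) * (real (n choose Suc i) * pochhammer x i * pochhammer y (n - Suc i))
          - real (n choose Suc i) * pochhammer x (Suc i) * pochhammer y (n - Suc i))"
  proof (intro sum.cong refl)
    fix i assume "i \<in> {..<n}"
    then have "n - i = Suc (n - Suc i)" and "real (n - Suc i) = real n - real i - 1"
      by (simp_all add: of_nat_diff)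
    then show "real (n choose Suc i) * pochhammer x i * pochhammer y (n - i) =
        (x + y + real n - 1) * (real (n choose Suc i) * pochhammer x i * pochhammer y (n - Suc i))
        - real (n choose Suc i) * pochhammer x (Suc i) * pochhammer y (n - Suc i)"
      by (simp only: pochhammer_Suc) (simp add: algebra_simps)
  qed
  also have "\<dots> = (x + y + real n - 1) * F - (pochhammer (x + y) n - pochhammer y n)"
    using vandermonde unfolding sum.lessThan_Suc_shift
    by (simp add: F_def sum_subtractf sum_distrib_left)
  finally have shifted: "(\<Sum>i<n. real (n choose Suc i) * pochhammer x i * pochhammer y (n - i)) =
      (x + y + real n - 1) * F - (pochhammer (x + y) n - pochhammer y n)" .
  have "(\<Sum>m=1..Suc n. real (Suc n choose m) * pochhammer x (m - 1) * pochhammer y (Suc n - m)) =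
      (\<Sum>i<Suc n. real (n choose i) * pochhammer x i * pochhammer y (n - i))
      + (\<Sum>i<n. real (n choose Suc i) * pochhammer x i * pochhammer y (n - i))"
    by (simp add: sum.atLeast1_atMost_eq sum.distrib[symmetric] algebra_simps)
  also have "\<dots> = (x + y + real n - 1) * F + pochhammer y n"
    unfolding vandermonde shifted by simp
  finally show ?thesis
    by (simp add: F_def sum.atLeast1_atMost_eq)
qed

lemma sum_binomial_pochhammer_pred:
  fixes x y :: real
  assumes "0 < x + y"
  shows "(\<Sum>m=1..n. real (n choose m) * pochhammer x (m - 1) * pochhammer y (n - m)) =
    pochhammer (x + y) (n - 1) * (\<Sum>i=1..n. pochhammer y (i - 1) / pochhammer (x + y) (i - 1))"
proof (induction n)
  case (Suc n)
  define G where "G n = (\<Sum>i=1..n. pochhammer y (i - 1) / pochhammer (x + y) (i - 1))" for n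
  have "pochhammer (x + y) n \<noteq> 0"
    using assms by (simp add: pochhammer_eq_0_iff)
  then have G_Suc: "pochhammer (x + y) n * G (Suc n) = pochhammer (x + y) n * G n + pochhammer y n"
    by (simp add: G_def field_simps)
  have "(\<Sum>m=1..Suc n. real (Suc n choose m) * pochhammer x (m - 1) * pochhammer y (Suc n - m)) =
      (x + y + real n - 1) * pochhammer (x + y) (n - 1) * G n + pochhammer y n"
    unfolding sum_binomial_pochhammer_pred_Suc Suc.IH G_def by (simp only: mult.assoc)
  also have "(x + y + real n - 1) * pochhammer (x + y) (n - 1) * G n = pochhammer (x + y) n * G n"
    by (cases n) (simp_all add: G_def pochhammer_Suc algebra_simps)
  finally show ?case
    using G_Suc by (simp add: G_def)
qed simp

section \<open>Feature weights of the IBP\<close>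

definition feature_sets :: "nat \<Rightarrow> nat set set" where
  "feature_sets n = {A. A \<noteq> {} \<and> A \<subseteq> {1..n}}"

text \<open>The EFPF factor of a feature set, normalised by \<open>(\<theta>+1)_(n-1)\<close> so that all weights sum to
  \<open>g_n(\<theta>,\<alpha>)\<close> and those of the \<open>r\<close>-element sets to \<open>d_(n,r)\<close>.\<close>

definition feature_weight :: "real \<Rightarrow> real \<Rightarrow> nat \<Rightarrow> nat set \<Rightarrow> real" where
  "feature_weight \<alpha> \<theta> n A =
     pochhammer (1 - \<alpha>) (card A - 1) * pochhammer (\<theta> + \<alpha>) (n - card A) / pochhammer (\<theta> + 1) (n - 1)"

lemma finite_feature_sets: "finite (feature_sets n)"
  unfolding feature_sets_def by (rule finite_subset[of _ "Pow {1..n}"]) auto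

lemma ordered_feature_allocations_eq: "ordered_feature_allocations n = {As. set As \<subseteq> feature_sets n}"
  by (auto simp: ordered_feature_allocations_def feature_sets_def)

lemma feature_weight_nonneg:
  assumes "\<alpha> < 1" and "0 < \<theta> + \<alpha>"
  shows "0 \<le> feature_weight \<alpha> \<theta> n A"
  using assms by (simp add: feature_weight_def pochhammer_pos less_imp_le)

lemma ibp_efpf_eq_feature_weight:
  "ibp_efpf \<gamma> \<alpha> \<theta> n As = \<gamma> ^ length As / fact (length As) * exp (- \<gamma> * g_fun n \<theta> \<alpha>)
     * prod_list (map (feature_weight \<alpha> \<theta> n) As)"
proof -
  have "prod_list (map (feature_weight \<alpha> \<theta> n) As) =
      prod_list (map (\<lambda>A. pochhammer (1 - \<alpha>) (card A - 1) * pochhammer (\<theta> + \<alpha>) (n - card A)) As)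
      / pochhammer (\<theta> + 1) (n - 1) ^ length As"
    by (induction As) (simp_all add: feature_weight_def)
  then show ?thesis
    by (simp add: ibp_efpf_def V_ibp_def power_divide)
qed

lemma ibp_gamma_mix_efpf_eq_feature_weight:
  assumes a: "0 < a" and b: "0 < b" and g: "0 \<le> g_fun n \<theta> \<alpha>"
  shows "ibp_gamma_mix_efpf a b \<alpha> \<theta> n As =
    (b / (b + g_fun n \<theta> \<alpha>)) powr a * pochhammer a (length As) / fact (length As)
      * (1 / (b + g_fun n \<theta> \<alpha>)) ^ length As * prod_list (map (feature_weight \<alpha> \<theta> n) As)"
proof -
  define C where "C = prod_list (map (feature_weight \<alpha> \<theta> n) As) / fact (length As)"
  have integrand: "(\<lambda>t. gamma_density a b t * ibp_efpf t \<alpha> \<theta> n As) =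
      (\<lambda>t. C * (gamma_density a b t * (t ^ length As * exp (- g_fun n \<theta> \<alpha> * t))))"
    by (simp add: ibp_efpf_eq_feature_weight C_def mult_ac)
  have "has_bochner_integral lborel (\<lambda>t. gamma_density a b t * ibp_efpf t \<alpha> \<theta> n As)
      (C * ((b / (b + g_fun n \<theta> \<alpha>)) powr a * pochhammer a (length As) / (b + g_fun n \<theta> \<alpha>) ^ length As))"
    unfolding integrand by (intro has_bochner_integral_mult_right has_bochner_integral_gamma_density_power_exp a b g)
  then show ?thesis
    unfolding ibp_gamma_mix_efpf_def
    by (simp add: has_bochner_integral_integral_eq C_def power_one_over field_simps)
qed

lemma sum_feature_weight_card:
  assumes "1 \<le> m"
  shows "(\<Sum>A\<in>{A\<in>feature_sets n. card A = m}. feature_weight \<alpha> \<theta> n A) =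
    real (n choose m) * pochhammer (1 - \<alpha>) (m - 1) * pochhammer (\<theta> + \<alpha>) (n - m) / pochhammer (\<theta> + 1) (n - 1)"
proof -
  have "{A\<in>feature_sets n. card A = m} = {A. A \<subseteq> {1..n} \<and> card A = m}"
    using assms by (auto simp: feature_sets_def)
  moreover have "feature_weight \<alpha> \<theta> n A =
      pochhammer (1 - \<alpha>) (m - 1) * pochhammer (\<theta> + \<alpha>) (n - m) / pochhammer (\<theta> + 1) (n - 1)"
    if "card A = m" for A
    using that by (simp add: feature_weight_def)
  ultimately show ?thesis
    using n_subsets[of "{1..n}" m] by simp
qed

lemma sum_feature_weight:
  assumes "0 < \<theta> + 1"
  shows "(\<Sum>A\<in>feature_sets n. feature_weight \<alpha> \<theta> n A) = g_fun n \<theta> \<alpha>"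
proof -
  have card_range: "card ` feature_sets n \<subseteq> {1..n}"
  proof
    fix m assume "m \<in> card ` feature_sets n"
    then obtain A where A: "A \<noteq> {}" "A \<subseteq> {1..n}" "m = card A"
      by (auto simp: feature_sets_def)
    moreover have "finite A"
      using A finite_subset by blast
    ultimately show "m \<in> {1..n}"
      using card_mono[of "{1..n}" A] by (auto simp: Suc_le_eq card_gt_0_iff)
  qed
  have "(\<Sum>A\<in>feature_sets n. feature_weight \<alpha> \<theta> n A) =
      (\<Sum>m=1..n. \<Sum>A\<in>{A\<in>feature_sets n. card A = m}. feature_weight \<alpha> \<theta> n A)"
    using sum.group[OF finite_feature_sets finite_atLeastAtMost card_range, of "feature_weight \<alpha> \<theta> n"] by simp
  also have "\<dots> = (\<Sum>m=1..n. real (n choose m) * pochhammer (1 - \<alpha>) (m - 1) * pochhammer (\<theta> + \<alpha>) (n - m))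
      / pochhammer (\<theta> + 1) (n - 1)"
    by (simp add: sum_feature_weight_card sum_divide_distrib)
  also have "\<dots> = g_fun n \<theta> \<alpha>"
    using sum_binomial_pochhammer_pred[of "1 - \<alpha>" "\<theta> + \<alpha>" n] assms pochhammer_pos[of "\<theta> + 1" "n - 1"]
    by (simp add: g_fun_def add.commute[of 1 \<theta>])
  finally show ?thesis .
qed

lemma pochhammer_eq_Gamma_ratio:
  fixes x :: real
  assumes "0 < x" and "1 \<le> n"
  shows "pochhammer x (n - 1) = Gamma (x + real n - 1) / Gamma x"
proof -
  have "x \<notin> \<int>\<^sub>\<le>\<^sub>0"
    using assms by (auto elim!: nonpos_Ints_cases)
  then show ?thesis
    using pochhammer_Gamma[of x "n - 1"] assms by (simp add: of_nat_diff algebra_simps)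
qed

lemma sum_feature_weight_card_eq_d_coef:
  assumes "1 \<le> r" and "r \<le> n" and "0 < \<theta> + 1"
  shows "(\<Sum>A\<in>{A\<in>feature_sets n. card A = r}. feature_weight \<alpha> \<theta> n A) = d_coef n r \<alpha> \<theta>"
  using assms pochhammer_eq_Gamma_ratio[of "\<theta> + 1" n] Gamma_real_pos[of "\<theta> + 1"]
  by (simp add: sum_feature_weight_card d_coef_def add_ac)

lemma d_coef_pos:
  assumes "\<alpha> < 1" and "0 < \<theta> + \<alpha>" and "1 \<le> r" and "r \<le> n"
  shows "0 < d_coef n r \<alpha> \<theta>"
  using assms by (simp add: d_coef_def pochhammer_pos Gamma_real_pos)

lemma K_count_fiber_eq:
  "{As \<in> ordered_feature_allocations n. K_count r As = j} =
     {As. set As \<subseteq> feature_sets n \<and> length (filter (\<lambda>A. card A = r) As) = j}"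
  by (simp add: ordered_feature_allocations_eq K_count_def)

lemma has_sum_ibp_efpf_K_count:
  assumes "\<alpha> < 1" and "0 < \<theta> + \<alpha>" and "1 \<le> r" and "r \<le> n" and "0 < \<gamma>"
  shows "((\<lambda>As. ibp_efpf \<gamma> \<alpha> \<theta> n As) has_sum pmf (poisson_pmf (\<gamma> * d_coef n r \<alpha> \<theta>)) j)
           {As \<in> ordered_feature_allocations n. K_count r As = j}"
proof -
  have \<theta>1: "0 < \<theta> + 1" using assms by simp
  show ?thesis
    using has_sum_poisson_count_filter[where S = "feature_sets n" and w = "feature_weight \<alpha> \<theta> n"
        and P = "\<lambda>A. card A = r" and c = \<gamma>, OF finite_feature_sets feature_weight_nonneg[OF assms(1,2)] assms(5)]
      d_coef_pos[OF assms(1-4)]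
    unfolding K_count_fiber_eq ibp_efpf_eq_feature_weight sum_feature_weight[OF \<theta>1]
      sum_feature_weight_card_eq_d_coef[OF assms(3,4) \<theta>1]
    by simp
qed

lemma has_sum_ibp_gamma_mix_efpf_K_count:
  assumes "\<alpha> < 1" and "0 < \<theta> + \<alpha>" and "1 \<le> r" and "r \<le> n" and "0 < a" and "0 < b"
  shows "((\<lambda>As. ibp_gamma_mix_efpf a b \<alpha> \<theta> n As) has_sum negbinomial_pmf a ((a / b) * d_coef n r \<alpha> \<theta>) j)
           {As \<in> ordered_feature_allocations n. K_count r As = j}"
proof -
  have \<theta>1: "0 < \<theta> + 1" using assms by simp
  have g: "0 \<le> g_fun n \<theta> \<alpha>"
    using sum_nonneg[of "feature_sets n" "feature_weight \<alpha> \<theta> n"] feature_weight_nonneg[OF assms(1,2)]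
      sum_feature_weight[OF \<theta>1] by simp
  show ?thesis
    using has_sum_negbinomial_count_filter[where S = "feature_sets n" and w = "feature_weight \<alpha> \<theta> n"
        and P = "\<lambda>A. card A = r", OF finite_feature_sets feature_weight_nonneg[OF assms(1,2)] assms(5,6)]
    unfolding K_count_fiber_eq ibp_gamma_mix_efpf_eq_feature_weight[OF assms(5,6) g]
      sum_feature_weight[OF \<theta>1] sum_feature_weight_card_eq_d_coef[OF assms(3,4) \<theta>1]
    by simp
qed

theorem propositionS3:
  fixes \<alpha> \<theta> \<gamma> a b :: real and n r :: nat
  assumes "0 \<le> \<alpha>" and "\<alpha> < 1" and "\<theta> > - \<alpha>"
    and "r \<in> {1..n}"
    and "\<gamma> > 0" and "a > 0" and "b > 0"
  shows "(\<forall>j::nat. ((\<lambda>As. ibp_efpf \<gamma> \<alpha> \<theta> n As) has_sum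
             pmf (poisson_pmf (\<gamma> * d_coef n r \<alpha> \<theta>)) j)
           {As \<in> ordered_feature_allocations n. K_count r As = j})
       \<and> (\<forall>j::nat. ((\<lambda>As. ibp_gamma_mix_efpf a b \<alpha> \<theta> n As) has_sum
             negbinomial_pmf a ((a / b) * d_coef n r \<alpha> \<theta>) j)
           {As \<in> ordered_feature_allocations n. K_count r As = j})"
proof -
  have "0 < \<theta> + \<alpha>" and "1 \<le> r" and "r \<le> n"
    using assms(3,4) by auto
  then show ?thesis
    using has_sum_ibp_efpf_K_count has_sum_ibp_gamma_mix_efpf_K_count assms(2,5-7) by blast
qed

end
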